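(* Let $f \colon Q \twoheadrightarrow Q'$ be a partial surjection between finite sets and $A$ a simple type. Then $D_Q(A)$ is contained in the domain of the partial function $[\![A]\!]_f$, and the restriction of $[\![A]\!]_f$ to $D_Q(A)$ is the unique function $p_{Q,Q'} \colon D_Q(A) \to D_{Q'}(A)$ satisfying $p_{Q,Q'}([\![M]\!]_Q) = [\![M]\!]_{Q'}$ for all $M \in \Lambda(A)$; in particular $p_{Q,Q'}$ is surjective.
   Context: Simple types are generated from a base type $o$ by $\Rightarrow$; $\Lambda(A)$ is the set of closed simply typed $\lambda$-terms of type $A$ modulo $\beta\eta$. For a finite set $Q$: $[\![o]\!]_Q = Q$, $[\![A\Rightarrow B]\!]_Q$ = all functions $[\![A]\!]_Q \to [\![B]\!]_Q$, and $[\![M]\!]_Q$ is the standard interpretation. $D_Q(A) = \{[\![M]\!]_Q : M \in \Lambda(A)\}$. For $R \subseteq Q\times Q'$, the logical relation $[\![A]\!]_R \subseteq [\![A]\!]_Q \times [\![A]\!]_{Q'}$ is given by $[\![o]\!]_R = R$ and $[\![A\Rightarrow B]\!]_R = \{(g,h) : \forall (x,y)\in[\![A]\!]_R,\ (g(x),h(y))\in[\![B]\!]_R\}$. A partial surjection $f \colon Q \twoheadrightarrow Q'$ is a relation that is the graph of a partial function surjective onto $Q'$; it is a standard fact (which may be used) that then $[\![A]\!]_f$ is also a partial surjection. *)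

theory Defs
  imports Main "HOL-Library.FSet" "HOL-Library.FuncSet"
begin

datatype ty = TO | Arr ty ty

datatype tm = Var nat | App tm tm | Lam ty tm

inductive typing :: "ty list \<Rightarrow> tm \<Rightarrow> ty \<Rightarrow> bool" where
  T_Var: "i < length \<Gamma> \<Longrightarrow> typing \<Gamma> (Var i) (\<Gamma> ! i)"
| T_App: "typing \<Gamma> M (Arr A B) \<Longrightarrow> typing \<Gamma> N A \<Longrightarrow> typing \<Gamma> (App M N) B"
| T_Lam: "typing (A # \<Gamma>) M B \<Longrightarrow> typing \<Gamma> (Lam A M) (Arr A B)"

datatype 'q val = Base 'q | Fun "('q val \<times> 'q val) fset"

definition app :: "'q val \<Rightarrow> 'q val \<Rightarrow> 'q val" where
  "app f x = (case f of Fun g \<Rightarrow> (THE y. (x, y) |\<in>| g) | Base _ \<Rightarrow> undefined)"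

fun sem :: "'q set \<Rightarrow> ty \<Rightarrow> 'q val set" where
  "sem Q TO = Base ` Q"
| "sem Q (Arr A B) = {Fun g | g.
      fst ` fset g = sem Q A \<and> snd ` fset g \<subseteq> sem Q B \<and>
      (\<forall>x y z. (x, y) |\<in>| g \<longrightarrow> (x, z) |\<in>| g \<longrightarrow> y = z)}"

primrec eval :: "'q set \<Rightarrow> tm \<Rightarrow> 'q val list \<Rightarrow> 'q val" where
  "eval Q (Var i) env = env ! i"
| "eval Q (App M N) env = app (eval Q M env) (eval Q N env)"
| "eval Q (Lam A M) env = Fun (Abs_fset ((\<lambda>x. (x, eval Q M (x # env))) ` sem Q A))"

definition den :: "'q set \<Rightarrow> tm \<Rightarrow> 'q val" where
  "den Q M = eval Q M []"

definition D :: "'q set \<Rightarrow> ty \<Rightarrow> 'q val set" where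
  "D Q A = {den Q M | M. typing [] M A}"

fun lrel :: "'q set \<Rightarrow> 'r set \<Rightarrow> ('q \<times> 'r) set \<Rightarrow> ty \<Rightarrow> ('q val \<times> 'r val) set" where
  "lrel Q Q' R TO = {(Base a, Base b) | a b. (a, b) \<in> R}"
| "lrel Q Q' R (Arr A B) = {(g, h). g \<in> sem Q (Arr A B) \<and> h \<in> sem Q' (Arr A B) \<and>
      (\<forall>x y. (x, y) \<in> lrel Q Q' R A \<longrightarrow> (app g x, app h y) \<in> lrel Q Q' R B)}"

definition partial_surj :: "'q set \<Rightarrow> 'r set \<Rightarrow> ('q \<times> 'r) set \<Rightarrow> bool" where
  "partial_surj Q Q' R \<longleftrightarrow> R \<subseteq> Q \<times> Q' \<and> single_valued R \<and> Range R = Q'"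

end

theory Submission
  imports Defs
begin

text \<open>
  The fundamental lemma of logical relations puts ([[M]]_Q, [[M]]_Q') into [[A]]_f for every
  closed term M of type A. Since [[A]]_f is again a partial surjection, in particular
  single-valued, [[M]]_Q determines [[M]]_Q'; so sending [[M]]_Q to [[M]]_Q' is a well-defined
  map on D_Q(A), it is the restriction of [[A]]_f, and it is onto D_Q'(A) by construction.
  That [[A]]_f is a partial surjection follows by induction on A: at A => B, single-valuedness
  uses surjectivity at A, and a preimage of h is obtained by choosing, for every x related to
  some (by single-valuedness unique) y, a preimage of h y, and an arbitrary value elsewhere.
\<close>

definition fun_graph :: "'q val set \<Rightarrow> ('q val \<Rightarrow> 'q val) \<Rightarrow> ('q val \<times> 'q val) fset" where
  "fun_graph S G = Abs_fset ((\<lambda>x. (x, G x)) ` S)"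

lemma fset_fun_graph: "finite S \<Longrightarrow> fset (fun_graph S G) = (\<lambda>x. (x, G x)) ` S"
  by (simp add: fun_graph_def Abs_fset_inverse)

lemma eval_Lam: "eval Q (Lam A M) env = Fun (fun_graph (sem Q A) (\<lambda>x. eval Q M (x # env)))"
  by (simp add: fun_graph_def)

lemma app_Fun_eqI:
  assumes "\<forall>x y z. (x, y) |\<in>| g \<longrightarrow> (x, z) |\<in>| g \<longrightarrow> y = z" and "(x, y) |\<in>| g"
  shows "app (Fun g) x = y"
  unfolding app_def val.case using assms by (intro the_equality) blast+

lemma app_Fun_fun_graph: "finite S \<Longrightarrow> x \<in> S \<Longrightarrow> app (Fun (fun_graph S G)) x = G x"
  by (rule app_Fun_eqI) (auto simp: fset_fun_graph)

lemma Fun_fun_graph_in_sem: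
  assumes "finite (sem Q A)" and "\<And>x. x \<in> sem Q A \<Longrightarrow> G x \<in> sem Q B"
  shows "Fun (fun_graph (sem Q A) G) \<in> sem Q (Arr A B)"
  using assms by (auto simp: fset_fun_graph image_image)

lemma sem_Arr_eq_Fun_fun_graph:
  assumes "g \<in> sem Q (Arr A B)"
  shows "g = Fun (fun_graph (sem Q A) (app g))"
proof -
  obtain k where g: "g = Fun k" and dom: "fst ` fset k = sem Q A"
    and functional: "\<forall>x y z. (x, y) |\<in>| k \<longrightarrow> (x, z) |\<in>| k \<longrightarrow> y = z"
    using assms by auto
  have "fset k = (\<lambda>x. (x, app g x)) ` sem Q A"
    using app_Fun_eqI[OF functional] dom g by force
  then show ?thesis
    unfolding fun_graph_def g by (metis fset_inverse)
qed

lemma app_in_sem: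
  assumes "g \<in> sem Q (Arr A B)" and "x \<in> sem Q A"
  shows "app g x \<in> sem Q B"
proof -
  obtain k where g: "g = Fun k" and dom: "fst ` fset k = sem Q A"
    and ran: "snd ` fset k \<subseteq> sem Q B"
    and functional: "\<forall>x y z. (x, y) |\<in>| k \<longrightarrow> (x, z) |\<in>| k \<longrightarrow> y = z"
    using assms(1) by auto
  obtain y where "(x, y) |\<in>| k"
    using dom assms(2) by force
  with app_Fun_eqI[OF functional] ran show ?thesis
    unfolding g by force
qed

lemma sem_Arr_ext:
  assumes "g \<in> sem Q (Arr A B)" and "h \<in> sem Q (Arr A B)"
    and "\<And>x. x \<in> sem Q A \<Longrightarrow> app g x = app h x"
  shows "g = h"
proof -
  have "fun_graph (sem Q A) (app g) = fun_graph (sem Q A) (app h)"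
    unfolding fun_graph_def using assms(3) by (simp cong: image_cong)
  with assms(1,2) show ?thesis
    using sem_Arr_eq_Fun_fun_graph by metis
qed

lemma finite_sem: "finite Q \<Longrightarrow> finite (sem Q A)"
proof (induction A)
  case TO
  then show ?case by simp
next
  case (Arr A B)
  have "sem Q (Arr A B) \<subseteq> (Fun \<circ> Abs_fset) ` Pow (sem Q A \<times> sem Q B)"
  proof
    fix g
    assume "g \<in> sem Q (Arr A B)"
    then obtain k where "g = Fun k" and "fst ` fset k = sem Q A" and "snd ` fset k \<subseteq> sem Q B"
      by auto
    then have "g = Fun k" and "fset k \<subseteq> sem Q A \<times> sem Q B"
      by force+
    moreover have "Fun k = (Fun \<circ> Abs_fset) (fset k)"
      by (simp add: fset_inverse)
    ultimately show "g \<in> (Fun \<circ> Abs_fset) ` Pow (sem Q A \<times> sem Q B)"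
      by blast
  qed
  moreover have "finite (sem Q A \<times> sem Q B)"
    using Arr by simp
  ultimately show ?case
    by (meson finite_Pow_iff finite_imageI finite_subset)
qed

lemma sem_Arr_eq_empty_iff:
  assumes "finite Q"
  shows "sem Q (Arr A B) = {} \<longleftrightarrow> sem Q A \<noteq> {} \<and> sem Q B = {}"
proof
  assume empty: "sem Q (Arr A B) = {}"
  show "sem Q A \<noteq> {} \<and> sem Q B = {}"
  proof (rule ccontr)
    assume "\<not> (sem Q A \<noteq> {} \<and> sem Q B = {})"
    then have "(SOME b. b \<in> sem Q B) \<in> sem Q B" if "x \<in> sem Q A" for x
      using that by (metis empty_iff some_in_eq)
    then have "Fun (fun_graph (sem Q A) (\<lambda>_. SOME b. b \<in> sem Q B)) \<in> sem Q (Arr A B)"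
      by (rule Fun_fun_graph_in_sem[OF finite_sem[OF assms]])
    with empty show False
      by (metis empty_iff)
  qed
next
  assume "sem Q A \<noteq> {} \<and> sem Q B = {}"
  then obtain x where "x \<in> sem Q A" and "sem Q B = {}"
    by blast
  then show "sem Q (Arr A B) = {}"
    using app_in_sem by (metis equals0I empty_iff)
qed

lemma sem_nonempty: "finite Q \<Longrightarrow> Q \<noteq> {} \<Longrightarrow> sem Q T \<noteq> {}"
  by (induction T) (auto simp del: sem.simps(2) simp: sem_Arr_eq_empty_iff)

lemma sem_empty_eq_empty_iff: "sem ({} :: 'q set) T = {} \<longleftrightarrow> sem ({} :: 'r set) T = {}"
proof (induction T)
  case TO
  show ?case by simp
next
  case (Arr A B)
  then show ?case
    by (simp only: sem_Arr_eq_empty_iff[OF finite.emptyI])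
qed

lemma sem_codomain_nonempty:
  assumes "finite Q" and "partial_surj Q Q' R"
    and "sem Q A \<noteq> {}" and "sem Q' (Arr A B) \<noteq> {}"
  shows "sem Q B \<noteq> {}"
proof (cases "Q = {}")
  case True
  then have "Q' = {}"
    using assms(2) by (auto simp: partial_surj_def)
  have "sem Q' A \<noteq> {}"
    using assms(3) sem_empty_eq_empty_iff[of A] unfolding True \<open>Q' = {}\<close> by blast
  then obtain y where "y \<in> sem Q' A"
    by blast
  moreover obtain h where "h \<in> sem Q' (Arr A B)"
    using assms(4) by blast
  ultimately have "sem Q' B \<noteq> {}"
    using app_in_sem by blast
  then show ?thesis
    using sem_empty_eq_empty_iff[of B] unfolding True \<open>Q' = {}\<close> by blast
next
  case False
  with assms(1) show ?thesis
    by (rule sem_nonempty)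
qed

lemma eval_in_sem:
  assumes "typing \<Gamma> M T" and "finite Q"
    and "length env = length \<Gamma>" and "\<forall>i<length \<Gamma>. env ! i \<in> sem Q (\<Gamma> ! i)"
  shows "eval Q M env \<in> sem Q T"
  using assms
proof (induction arbitrary: env rule: typing.induct)
  case (T_Var i \<Gamma>)
  then show ?case by simp
next
  case (T_App \<Gamma> M A B N)
  then show ?case
    using app_in_sem[OF T_App.IH(1)[OF T_App.prems] T_App.IH(2)[OF T_App.prems]] by simp
next
  case (T_Lam A \<Gamma> M B)
  have "eval Q M (x # env) \<in> sem Q B" if "x \<in> sem Q A" for x
    using T_Lam.IH[of "x # env"] T_Lam.prems that by (auto simp: nth_Cons split: nat.splits)
  then show ?case
    unfolding eval_Lam by (rule Fun_fun_graph_in_sem[OF finite_sem[OF T_Lam.prems(1)]])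
qed

lemma lrel_subset_sem: "R \<subseteq> Q \<times> Q' \<Longrightarrow> lrel Q Q' R T \<subseteq> sem Q T \<times> sem Q' T"
  by (cases T) auto

lemma Fun_fun_graph_in_lrel:
  assumes "finite Q" and "R \<subseteq> Q \<times> Q'" and "h \<in> sem Q' (Arr A B)"
    and "\<And>x. x \<in> sem Q A \<Longrightarrow> G x \<in> sem Q B"
    and "\<And>x y. (x, y) \<in> lrel Q Q' R A \<Longrightarrow> (G x, app h y) \<in> lrel Q Q' R B"
  shows "(Fun (fun_graph (sem Q A) G), h) \<in> lrel Q Q' R (Arr A B)"
proof -
  have "(app (Fun (fun_graph (sem Q A) G)) x, app h y) \<in> lrel Q Q' R B"
    if xy: "(x, y) \<in> lrel Q Q' R A" for x y
  proof -
    have "x \<in> sem Q A"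
      using xy lrel_subset_sem[OF assms(2)] by blast
    then have "app (Fun (fun_graph (sem Q A) G)) x = G x"
      by (rule app_Fun_fun_graph[OF finite_sem[OF assms(1)]])
    with assms(5)[OF xy] show ?thesis
      by (simp only:)
  qed
  moreover have "Fun (fun_graph (sem Q A) G) \<in> sem Q (Arr A B)"
    using Fun_fun_graph_in_sem[OF finite_sem[OF assms(1)] assms(4)] .
  ultimately show ?thesis
    using assms(3) by (simp only: lrel.simps(2) mem_Collect_eq prod.case) blast
qed

lemma eval_in_lrel:
  assumes "finite Q" and "finite Q'" and "R \<subseteq> Q \<times> Q'" and "typing \<Gamma> M T"
    and "length env = length \<Gamma>" and "length env' = length \<Gamma>"
    and "\<forall>i<length \<Gamma>. (env ! i, env' ! i) \<in> lrel Q Q' R (\<Gamma> ! i)"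
  shows "(eval Q M env, eval Q' M env') \<in> lrel Q Q' R T"
  using assms(4-)
proof (induction arbitrary: env env' rule: typing.induct)
  case (T_Var i \<Gamma>)
  then show ?case by simp
next
  case (T_App \<Gamma> M A B N)
  have "(eval Q M env, eval Q' M env') \<in> lrel Q Q' R (Arr A B)"
    and "(eval Q N env, eval Q' N env') \<in> lrel Q Q' R A"
    using T_App.IH T_App.prems by blast+
  then show ?case by simp
next
  case (T_Lam A \<Gamma> M B)
  have env: "\<forall>i<length \<Gamma>. env ! i \<in> sem Q (\<Gamma> ! i)"
    and env': "\<forall>i<length \<Gamma>. env' ! i \<in> sem Q' (\<Gamma> ! i)"
    using T_Lam.prems(3) lrel_subset_sem[OF assms(3)] by blast+
  have "eval Q' (Lam A M) env' \<in> sem Q' (Arr A B)"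
    using eval_in_sem[OF typing.T_Lam[OF T_Lam.hyps] assms(2) T_Lam.prems(2) env'] .
  moreover have "eval Q M (x # env) \<in> sem Q B" if "x \<in> sem Q A" for x
    using eval_in_sem[OF T_Lam.hyps assms(1), of "x # env"] that env T_Lam.prems(1)
    by (auto simp: nth_Cons split: nat.splits)
  moreover have "(eval Q M (x # env), app (eval Q' (Lam A M) env') y) \<in> lrel Q Q' R B"
    if xy: "(x, y) \<in> lrel Q Q' R A" for x y
  proof -
    have "y \<in> sem Q' A"
      using xy lrel_subset_sem[OF assms(3)] by blast
    then have "app (eval Q' (Lam A M) env') y = eval Q' M (y # env')"
      unfolding eval_Lam by (rule app_Fun_fun_graph[OF finite_sem[OF assms(2)]])
    moreover have "(eval Q M (x # env), eval Q' M (y # env')) \<in> lrel Q Q' R B"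
      using T_Lam.IH[of "x # env" "y # env'"] T_Lam.prems xy
      by (auto simp: nth_Cons split: nat.splits)
    ultimately show ?thesis
      by simp
  qed
  ultimately show ?case
    unfolding eval_Lam[of Q] by (rule Fun_fun_graph_in_lrel[OF assms(1,3)])
qed

lemma den_in_lrel:
  assumes "finite Q" and "finite Q'" and "R \<subseteq> Q \<times> Q'" and "typing [] M T"
  shows "(den Q M, den Q' M) \<in> lrel Q Q' R T"
  using eval_in_lrel[OF assms, of "[]" "[]"] by (simp add: den_def)

lemma single_valued_lrel_Arr:
  assumes "Range (lrel Q Q' R A) = sem Q' A" and "single_valued (lrel Q Q' R B)"
  shows "single_valued (lrel Q Q' R (Arr A B))"
proof (rule single_valuedI)
  fix g h h'
  assume gh: "(g, h) \<in> lrel Q Q' R (Arr A B)" and gh': "(g, h') \<in> lrel Q Q' R (Arr A B)"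
  have "app h y = app h' y" if "y \<in> sem Q' A" for y
  proof -
    obtain x where "(x, y) \<in> lrel Q Q' R A"
      using assms(1) \<open>y \<in> sem Q' A\<close> by blast
    then have "(app g x, app h y) \<in> lrel Q Q' R B" and "(app g x, app h' y) \<in> lrel Q Q' R B"
      using gh gh' by auto
    with assms(2) show ?thesis
      by (auto dest: single_valuedD)
  qed
  moreover from gh gh' have "h \<in> sem Q' (Arr A B)" and "h' \<in> sem Q' (Arr A B)"
    by (simp_all only: lrel.simps(2) mem_Collect_eq prod.case)
  ultimately show "h = h'"
    using sem_Arr_ext by blast
qed

lemma Range_lrel_Arr:
  assumes "finite Q" and "partial_surj Q Q' R"
    and "single_valued (lrel Q Q' R A)" and "Range (lrel Q Q' R B) = sem Q' B"
  shows "Range (lrel Q Q' R (Arr A B)) = sem Q' (Arr A B)"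
proof
  have sub: "R \<subseteq> Q \<times> Q'"
    using assms(2) by (simp add: partial_surj_def)
  then show "Range (lrel Q Q' R (Arr A B)) \<subseteq> sem Q' (Arr A B)"
    using lrel_subset_sem by blast
  show "sem Q' (Arr A B) \<subseteq> Range (lrel Q Q' R (Arr A B))"
  proof
    fix h
    assume h: "h \<in> sem Q' (Arr A B)"
    have "\<forall>x \<in> sem Q A. \<exists>z. z \<in> sem Q B \<and>
        (\<forall>y. (x, y) \<in> lrel Q Q' R A \<longrightarrow> (z, app h y) \<in> lrel Q Q' R B)"
    proof
      fix x
      assume x: "x \<in> sem Q A"
      show "\<exists>z. z \<in> sem Q B \<and> (\<forall>y. (x, y) \<in> lrel Q Q' R A \<longrightarrow> (z, app h y) \<in> lrel Q Q' R B)"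
      proof (cases "x \<in> Domain (lrel Q Q' R A)")
        case True
        then obtain y where xy: "(x, y) \<in> lrel Q Q' R A"
          by blast
        then have "y \<in> sem Q' A"
          using lrel_subset_sem[OF sub] by blast
        then have "app h y \<in> sem Q' B"
          by (rule app_in_sem[OF h])
        then obtain z where z: "(z, app h y) \<in> lrel Q Q' R B"
          using assms(4) by blast
        then have "z \<in> sem Q B"
          using lrel_subset_sem[OF sub] by blast
        moreover have "y' = y" if "(x, y') \<in> lrel Q Q' R A" for y'
          using single_valuedD[OF assms(3) that xy] .
        ultimately show ?thesis
          using z by blast
      next
        case False
        have "sem Q B \<noteq> {}"
          using sem_codomain_nonempty[OF assms(1,2)] x h by blast
        with False show ?thesis
          by blast
      qed
    qed
    then obtain G where G: "\<forall>x \<in> sem Q A. G x \<in> sem Q B \<and>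
        (\<forall>y. (x, y) \<in> lrel Q Q' R A \<longrightarrow> (G x, app h y) \<in> lrel Q Q' R B)"
      by (rule bchoice [THEN exE])
    have "(Fun (fun_graph (sem Q A) G), h) \<in> lrel Q Q' R (Arr A B)"
    proof (rule Fun_fun_graph_in_lrel[OF assms(1) sub h])
      show "G x \<in> sem Q B" if "x \<in> sem Q A" for x
        using G that by blast
      show "(G x, app h y) \<in> lrel Q Q' R B" if "(x, y) \<in> lrel Q Q' R A" for x y
        using G that lrel_subset_sem[OF sub] by blast
    qed
    then show "h \<in> Range (lrel Q Q' R (Arr A B))"
      by blast
  qed
qed

lemma partial_surj_lrel:
  assumes "finite Q" and "partial_surj Q Q' R"
  shows "partial_surj (sem Q T) (sem Q' T) (lrel Q Q' R T)"
proof -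
  have sub: "R \<subseteq> Q \<times> Q'" and sv: "single_valued R" and ran: "Range R = Q'"
    using assms(2) unfolding partial_surj_def by blast+
  have "single_valued (lrel Q Q' R T) \<and> Range (lrel Q Q' R T) = sem Q' T"
  proof (induction T)
    case TO
    have "lrel Q Q' R TO = map_prod Base Base ` R"
      by auto
    moreover have "single_valued (map_prod Base Base ` R)"
      using sv by (auto simp: single_valued_def)
    moreover have "Range (map_prod Base Base ` R) = Base ` Q'"
      using ran by force
    ultimately show ?case
      by (simp only: sem.simps(1))
  next
    case (Arr A B)
    then show ?case
      using single_valued_lrel_Arr[of Q Q' R A B] Range_lrel_Arr[OF assms, of A B] by blast
  qed
  with lrel_subset_sem[OF sub] show ?thesis
    unfolding partial_surj_def by blast
qed

lemma ex1_factorization: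
  assumes "\<And>M N. P M \<Longrightarrow> P N \<Longrightarrow> d M = d N \<Longrightarrow> d' M = d' N"
  shows "\<exists>!p. p \<in> {d M | M. P M} \<rightarrow>\<^sub>E {d' M | M. P M} \<and> (\<forall>M. P M \<longrightarrow> p (d M) = d' M)"
proof
  define p where "p = restrict (\<lambda>x. d' (SOME M. P M \<and> d M = x)) {d M | M. P M}"
  have p_d: "p (d M) = d' M" if "P M" for M
  proof -
    have "P (SOME N. P N \<and> d N = d M) \<and> d (SOME N. P N \<and> d N = d M) = d M"
      using someI[of "\<lambda>N. P N \<and> d N = d M"] that by blast
    then have "d' (SOME N. P N \<and> d N = d M) = d' M"
      using assms that by blast
    moreover have "d M \<in> {d M | M. P M}"
      using that by blast
    ultimately show ?thesis
      unfolding p_def by simp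
  qed
  have "p \<in> {d M | M. P M} \<rightarrow>\<^sub>E {d' M | M. P M}"
  proof (rule PiE_I)
    show "p x \<in> {d' M | M. P M}" if "x \<in> {d M | M. P M}" for x
      using that p_d by blast
    show "p x = undefined" if "x \<notin> {d M | M. P M}" for x
      using that unfolding p_def by auto
  qed
  with p_d show "p \<in> {d M | M. P M} \<rightarrow>\<^sub>E {d' M | M. P M} \<and> (\<forall>M. P M \<longrightarrow> p (d M) = d' M)"
    by blast
  fix q
  assume q: "q \<in> {d M | M. P M} \<rightarrow>\<^sub>E {d' M | M. P M} \<and> (\<forall>M. P M \<longrightarrow> q (d M) = d' M)"
  show "q = p"
  proof (rule extensionalityI[of _ "{d M | M. P M}"])
    show "q \<in> extensional {d M | M. P M}" and "p \<in> extensional {d M | M. P M}"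
      using q \<open>p \<in> _\<close> by (auto simp: PiE_def)
    show "q x = p x" if "x \<in> {d M | M. P M}" for x
      using that q p_d by auto
  qed
qed

lemma single_valued_graph_factorization:
  assumes "single_valued S" and "\<And>M. P M \<Longrightarrow> (d M, d' M) \<in> S"
    and "\<forall>M. P M \<longrightarrow> p (d M) = d' M"
  shows "\<forall>x \<in> {d M | M. P M}. \<forall>y. (x, y) \<in> S \<longleftrightarrow> y = p x"
proof (intro ballI allI)
  fix x y
  assume "x \<in> {d M | M. P M}"
  then obtain M where "P M" and "x = d M"
    by blast
  with assms(2,3) have "(x, p x) \<in> S"
    by simp
  then show "(x, y) \<in> S \<longleftrightarrow> y = p x"
    using single_valuedD[OF assms(1)] by blast
qed

lemma image_factorization:
  "\<forall>M. P M \<longrightarrow> p (d M) = d' M \<Longrightarrow> p ` {d M | M. P M} = {d' M | M. P M}"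
  by (auto simp: image_iff) metis

theorem mainTheorem6:
  fixes Q :: "'q set" and Q' :: "'r set" and R :: "('q \<times> 'r) set" and A :: ty
  assumes "finite Q" and "finite Q'" and "partial_surj Q Q' R"
  shows "D Q A \<subseteq> Domain (lrel Q Q' R A)
    \<and> (\<exists>!p. p \<in> D Q A \<rightarrow>\<^sub>E D Q' A \<and> (\<forall>M. typing [] M A \<longrightarrow> p (den Q M) = den Q' M))
    \<and> (\<forall>p. p \<in> D Q A \<rightarrow>\<^sub>E D Q' A \<and> (\<forall>M. typing [] M A \<longrightarrow> p (den Q M) = den Q' M) \<longrightarrow>
          (\<forall>x \<in> D Q A. \<forall>y. (x, y) \<in> lrel Q Q' R A \<longleftrightarrow> y = p x) \<and> p ` D Q A = D Q' A)"
proof -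
  have "R \<subseteq> Q \<times> Q'"
    using assms(3) unfolding partial_surj_def by blast
  then have related: "(den Q M, den Q' M) \<in> lrel Q Q' R A" if "typing [] M A" for M
    using den_in_lrel[OF assms(1,2)] that by blast
  have single_valued: "single_valued (lrel Q Q' R A)"
    using partial_surj_lrel[OF assms(1,3)] unfolding partial_surj_def by blast
  have "D Q A \<subseteq> Domain (lrel Q Q' R A)"
    unfolding D_def using related by blast
  moreover have "\<exists>!p. p \<in> D Q A \<rightarrow>\<^sub>E D Q' A \<and> (\<forall>M. typing [] M A \<longrightarrow> p (den Q M) = den Q' M)"
    unfolding D_def
    by (rule ex1_factorization) (use related single_valuedD[OF single_valued] in metis)
  moreover have "(\<forall>x \<in> D Q A. \<forall>y. (x, y) \<in> lrel Q Q' R A \<longleftrightarrow> y = p x) \<and> p ` D Q A = D Q' A"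
    if "\<forall>M. typing [] M A \<longrightarrow> p (den Q M) = den Q' M" for p
    unfolding D_def
    using single_valued_graph_factorization[OF single_valued related that] image_factorization[where d = "den Q", OF that]
    by blast
  ultimately show ?thesis
    by (intro conjI allI impI) blast+
qed

end
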